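(* Let $\alpha\in(0,1)$ and let $\phi:[0,1]\to[0,\infty)$ be four times continuously differentiable on $(0,1]$ with finite constants $W>0$, $c$, $c'$ such that $(2-\alpha)(3-\alpha)(4-\alpha)Wp^{\alpha-4}+c'\le|\phi^{(4)}(p)|\le(2-\alpha)(3-\alpha)(4-\alpha)Wp^{\alpha-4}+c$ for all $p\in(0,1]$. Let $n\ge1$, and $\Delta,p$ with $\frac1n\lesssim\Delta<p\le1$, and let $\tilde N\sim\mathrm{Poisson}(np)$. Then $$\mathrm{Var}\Big[\bar\phi_\Delta\Big(\frac{\tilde N}{n}\Big)-\frac{\tilde N}{2n^2}\bar\phi_\Delta^{(2)}\Big(\frac{\tilde N}{n}\Big)-\phi(p)+\frac{p\phi^{(2)}(p)}{2n}\Big]\lesssim\frac{p^{2\alpha-1}}{n}+\frac{1}{n^4\Delta^{4-2\alpha}}+\frac pn.$$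
   Context: For the Bernstein basis $B_{\nu,N}(t)=\binom N\nu t^\nu(1-t)^{N-\nu}$ define $H_L(x;\phi,a,b)=\phi(a)+\sum_{m=1}^L\frac{\phi^{(m)}(a)}{m!}(x-a)^m\sum_{\ell=0}^{L-m}\frac{L+1}{L+\ell+1}B_{\ell,L+\ell+1}\big(\tfrac{x-a}{b-a}\big)$ (derivatives at $1$ are one-sided). For $\Delta\in(0,1]$, $\bar\phi_\Delta:[0,\infty)\to\mathbb{R}$ is $\bar\phi_\Delta(x)=H_4(\Delta/2;\phi,\Delta,\Delta/2)$ if $x\le\Delta/2$; $H_4(x;\phi,\Delta,\Delta/2)$ if $\Delta/2<x<\Delta$; $\phi(x)$ if $\Delta\le x\le1$; $H_4(x;\phi,1,2)$ if $1<x<2$; $H_4(2;\phi,1,2)$ if $x\ge2$; $\bar\phi^{(2)}_\Delta$ is its second derivative. $a\lesssim b$ means $a\le Cb$ for a positive constant $C$ not depending on $n,\Delta,p$ (possibly on $\phi,\alpha$); $\frac1n\lesssim\Delta$ means $\Delta\ge c_0/n$ for a fixed constant $c_0>0$. *)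

theory Defs
  imports "HOL-Analysis.Analysis" "HOL-Probability.Probability"
begin

text \<open>Higher derivatives of a function taken within a set S (one-sided at boundary points of S).
  For phi on [0,1] we use S = (0,1], so the derivatives at 1 are left-sided.\<close>
fun hderiv :: "real set \<Rightarrow> nat \<Rightarrow> (real \<Rightarrow> real) \<Rightarrow> real \<Rightarrow> real" where
  "hderiv S 0 f = f"
| "hderiv S (Suc m) f = (\<lambda>x. vector_derivative (hderiv S m f) (at x within S))"

abbreviation phider :: "nat \<Rightarrow> (real \<Rightarrow> real) \<Rightarrow> real \<Rightarrow> real" where
  "phider m phi \<equiv> hderiv {0<..1} m phi"

text \<open>H_L(x; phi, a, b), with B_{nu,N} = Bernstein N nu.\<close>
definition HL :: "nat \<Rightarrow> real \<Rightarrow> (real \<Rightarrow> real) \<Rightarrow> real \<Rightarrow> real \<Rightarrow> real" where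
  "HL L x phi a b = phi a +
     (\<Sum>m=1..L. phider m phi a / fact m * (x - a) ^ m *
        (\<Sum>l=0..L-m. (real L + 1) / (real L + real l + 1) *
            Bernstein (L + l + 1) l ((x - a) / (b - a))))"

text \<open>The extension bar-phi_Delta; extended to negative arguments by the constant of the first
  branch (only its values on [0,\<infinity>) matter, and this makes its derivatives at 0 the one-sided ones).\<close>
definition phibar :: "(real \<Rightarrow> real) \<Rightarrow> real \<Rightarrow> real \<Rightarrow> real" where
  "phibar phi \<Delta> x =
     (if x \<le> \<Delta> / 2 then HL 4 (\<Delta> / 2) phi \<Delta> (\<Delta> / 2)
      else if x < \<Delta> then HL 4 x phi \<Delta> (\<Delta> / 2)
      else if x \<le> 1 then phi x
      else if x < 2 then HL 4 x phi 1 2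
      else HL 4 2 phi 1 2)"

definition phibar2 :: "(real \<Rightarrow> real) \<Rightarrow> real \<Rightarrow> real \<Rightarrow> real" where
  "phibar2 phi \<Delta> = deriv (deriv (phibar phi \<Delta>))"

end

theory Submission
  imports Defs
begin

text \<open>Integrating the bound on \<open>\<phi>^(4)\<close> down from \<open>1\<close> gives \<open>|\<phi>^(m)(x)| \<le> A x^(\<alpha>-m)\<close> for
  \<open>m = 1..4\<close>. The blending polynomials \<open>H_4\<close> agree with \<open>\<phi>\<close> to second order at \<open>\<Delta>\<close> and at \<open>1\<close>
  and are flat at \<open>\<Delta>/2\<close> and \<open>2\<close>, so the extension \<open>\<phi>\<^sub>\<Delta>\<close> is \<open>C^2\<close> with both \<open>|\<phi>\<^sub>\<Delta>'(y)|\<close> and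
  \<open>|y \<phi>\<^sub>\<Delta>''(y)|\<close> at most \<open>K max(y,\<Delta>)^(\<alpha>-1)\<close>. Centre the estimator at its value for \<open>N/n = p\<close>.
  By the mean value theorem its square is of order \<open>p^(2\<alpha>-2) ((N/n - p)^2 + n^-2)\<close> when
  \<open>N/n \<ge> p/2\<close>, and of order \<open>\<Delta>^(2\<alpha>-2) p^2\<close> otherwise. The Poisson variance turns the first
  bound into \<open>p^(2\<alpha>-1)/n\<close>. The second case has probability at most
  \<open>E 2^(np/2 - N) = exp(-(1 - ln 2) np/2)\<close>, which together with \<open>\<Delta> \<ge> c0/n\<close> absorbs the factor
  \<open>(np)^(3-2\<alpha>)\<close>. Finally, a variance is at most the second moment about any constant.\<close>

section \<open>Poisson moments and variance\<close>

lemma measure_pmf_expectation_eq_sums: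
  fixes f :: "nat \<Rightarrow> real"
  assumes "\<And>k. f k \<ge> 0" and "(\<lambda>k. pmf M k * f k) sums s"
  shows "integrable (measure_pmf M) f" "measure_pmf.expectation M f = s"
proof -
  have summable: "integrable (count_space UNIV) (\<lambda>k. pmf M k * f k)"
    using assms unfolding integrable_count_space_nat_iff by (auto simp: sums_iff abs_mult)
  show "integrable (measure_pmf M) f"
    unfolding measure_pmf_eq_density using summable by (subst integrable_density) auto
  have "measure_pmf.expectation M f = (\<integral>k. pmf M k * f k \<partial>count_space UNIV)"
    unfolding measure_pmf_eq_density by (subst integral_density) auto
  also have "\<dots> = s"
    using summable assms by (subst integral_count_space_nat) (simp_all add: sums_iff)
  finally show "measure_pmf.expectation M f = s" .
qed

lemma sums_exp_real: "(\<lambda>k. x ^ k / fact k) sums exp (x::real)"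
  using exp_converges[of x] by (simp add: divide_inverse mult.commute scaleR_conv_of_real)

lemma sums_exp_factorial_moment1: "(\<lambda>k. real k * x ^ k / fact k) sums (x * exp (x::real))"
proof -
  have "(\<lambda>k. real (Suc k) * x ^ Suc k / fact (Suc k)) = (\<lambda>k. x * (x ^ k / fact k))"
    by (auto simp: fun_eq_iff fact_Suc divide_simps)
  then have "(\<lambda>k. real (Suc k) * x ^ Suc k / fact (Suc k)) sums (x * exp x)"
    using sums_mult[OF sums_exp_real, of x] by simp
  then show ?thesis by (subst (asm) sums_Suc_iff) simp
qed

lemma sums_exp_factorial_moment2:
  "(\<lambda>k. real k * (real k - 1) * x ^ k / fact k) sums (x\<^sup>2 * exp (x::real))"
proof -
  have "(\<lambda>k. real (Suc k) * (real (Suc k) - 1) * x ^ Suc k / fact (Suc k)) =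
      (\<lambda>k. x * (real k * x ^ k / fact k))"
    by (auto simp: fun_eq_iff fact_Suc divide_simps)
  then have "(\<lambda>k. real (Suc k) * (real (Suc k) - 1) * x ^ Suc k / fact (Suc k)) sums (x\<^sup>2 * exp x)"
    using sums_mult[OF sums_exp_factorial_moment1, of x] by (simp add: power2_eq_square mult.assoc)
  then show ?thesis by (subst (asm) sums_Suc_iff) simp
qed

lemma poisson_second_central_moment:
  assumes "l > 0"
  shows "integrable (measure_pmf (poisson_pmf l)) (\<lambda>k. (real k - l)\<^sup>2)"
    "measure_pmf.expectation (poisson_pmf l) (\<lambda>k. (real k - l)\<^sup>2) = l"
proof -
  have "(\<lambda>k. exp (-l) * (real k * (real k - 1) * l ^ k / fact k
        + (1 - 2*l) * (real k * l ^ k / fact k) + l\<^sup>2 * (l ^ k / fact k)))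
      sums (exp (-l) * (l\<^sup>2 * exp l + (1 - 2*l) * (l * exp l) + l\<^sup>2 * exp l))"
    by (intro sums_mult sums_add sums_exp_factorial_moment2 sums_exp_factorial_moment1 sums_exp_real)
  also have "(\<lambda>k. exp (-l) * (real k * (real k - 1) * l ^ k / fact k
        + (1 - 2*l) * (real k * l ^ k / fact k) + l\<^sup>2 * (l ^ k / fact k)))
      = (\<lambda>k. pmf (poisson_pmf l) k * (real k - l)\<^sup>2)"
    using assms by (auto simp: fun_eq_iff field_simps power2_eq_square)
  also have "exp (-l) * (l\<^sup>2 * exp l + (1 - 2*l) * (l * exp l) + l\<^sup>2 * exp l) = l"
    by (simp add: field_simps power2_eq_square exp_minus)
  finally show "integrable (measure_pmf (poisson_pmf l)) (\<lambda>k. (real k - l)\<^sup>2)"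
    "measure_pmf.expectation (poisson_pmf l) (\<lambda>k. (real k - l)\<^sup>2) = l"
    using measure_pmf_expectation_eq_sums by auto
qed

lemma poisson_generating_function:
  assumes "l > 0" "r \<ge> 0"
  shows "integrable (measure_pmf (poisson_pmf l)) (\<lambda>k. r ^ k)"
    "measure_pmf.expectation (poisson_pmf l) (\<lambda>k. r ^ k) = exp (l * (r - 1))"
proof -
  have "(\<lambda>k. exp (-l) * ((l * r) ^ k / fact k)) sums (exp (-l) * exp (l * r))"
    by (intro sums_mult sums_exp_real)
  also have "(\<lambda>k. exp (-l) * ((l * r) ^ k / fact k)) = (\<lambda>k. pmf (poisson_pmf l) k * r ^ k)"
    using assms by (auto simp: fun_eq_iff field_simps power_mult_distrib)
  also have "exp (-l) * exp (l * r) = exp (l * (r - 1))"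
    by (simp add: exp_add[symmetric] algebra_simps)
  finally show "integrable (measure_pmf (poisson_pmf l)) (\<lambda>k. r ^ k)"
    "measure_pmf.expectation (poisson_pmf l) (\<lambda>k. r ^ k) = exp (l * (r - 1))"
    using measure_pmf_expectation_eq_sums assms by auto
qed

lemma variance_le_expectation_sq_dev:
  fixes f :: "'a \<Rightarrow> real"
  assumes int_sq: "integrable (measure_pmf M) (\<lambda>x. (f x - c)\<^sup>2)"
  shows "measure_pmf.variance M f \<le> measure_pmf.expectation M (\<lambda>x. (f x - c)\<^sup>2)"
proof -
  define E where "E = measure_pmf.expectation M f"
  have "integrable (measure_pmf M) (\<lambda>x. f x - c)"
  proof (rule Bochner_Integration.integrable_bound)
    show "integrable (measure_pmf M) (\<lambda>x. (f x - c)\<^sup>2 + 1)"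
      using int_sq by simp
    have "\<bar>t\<bar> \<le> t\<^sup>2 + 1" for t :: real
    proof -
      have "0 \<le> (\<bar>t\<bar> - 1)\<^sup>2" by simp
      then have "2 * \<bar>t\<bar> \<le> t\<^sup>2 + 1" by (simp add: power2_eq_square algebra_simps)
      then show ?thesis by linarith
    qed
    then show "AE x in measure_pmf M. norm (f x - c) \<le> norm ((f x - c)\<^sup>2 + 1)"
      by simp
  qed simp
  then have int: "integrable (measure_pmf M) f"
    using Bochner_Integration.integrable_add[of _ "\<lambda>x. f x - c" "\<lambda>_. c"] by simp
  have "(\<lambda>x. (f x - E)\<^sup>2) = (\<lambda>x. (f x - c)\<^sup>2 + (2 * (c - E)) * (f x - c) + (c - E)\<^sup>2)"
    by (rule ext) (simp add: power2_eq_square algebra_simps)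
  then have int_var: "integrable (measure_pmf M) (\<lambda>x. (f x - E)\<^sup>2)"
    using int_sq \<open>integrable (measure_pmf M) (\<lambda>x. f x - c)\<close> by simp
  have "(\<lambda>x. (f x - c)\<^sup>2) = (\<lambda>x. (f x - E)\<^sup>2 + (2 * (E - c)) * (f x - E) + (E - c)\<^sup>2)"
    by (rule ext) (simp add: power2_eq_square algebra_simps)
  then have "measure_pmf.expectation M (\<lambda>x. (f x - c)\<^sup>2) =
      measure_pmf.variance M f + (2 * (E - c)) * measure_pmf.expectation M (\<lambda>x. f x - E) + (E - c)\<^sup>2"
    using int_var int unfolding E_def by simp
  also have "measure_pmf.expectation M (\<lambda>x. f x - E) = 0"
    using int unfolding E_def by simp
  finally show ?thesis by simp
qed

lemma poisson_chernoff_weight: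
  assumes "l > 0"
  shows "integrable (measure_pmf (poisson_pmf l)) (\<lambda>k. 2 powr (l / 2) * (1 / 2) ^ k)"
    "measure_pmf.expectation (poisson_pmf l) (\<lambda>k. 2 powr (l / 2) * (1 / 2) ^ k) =
      exp (- ((1 - ln 2) / 2) * l)"
    "real k < l / 2 \<Longrightarrow> 1 \<le> 2 powr (l / 2) * (1 / 2 :: real) ^ k"
proof -
  note pgf = poisson_generating_function[OF assms, of "1 / 2"]
  show "integrable (measure_pmf (poisson_pmf l)) (\<lambda>k. 2 powr (l / 2) * (1 / 2) ^ k)"
    using pgf by simp
  have "2 powr (l / 2) * exp (l * (1 / 2 - 1)) = exp (- ((1 - ln 2) / 2) * l)"
    by (simp add: powr_def exp_add[symmetric] field_simps)
  then show "measure_pmf.expectation (poisson_pmf l) (\<lambda>k. 2 powr (l / 2) * (1 / 2) ^ k) =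
      exp (- ((1 - ln 2) / 2) * l)"
    using pgf by simp
  assume "real k < l / 2"
  then have "2 powr real k \<le> 2 powr (l / 2)" by (intro powr_mono) auto
  then show "1 \<le> 2 powr (l / 2) * (1 / 2 :: real) ^ k"
    by (simp add: powr_realpow power_one_over divide_simps)
qed

section \<open>Power bounds for the derivatives of \<open>\<phi>\<close>\<close>

lemma abs_diff_le_of_abs_deriv_le:
  fixes f f' g g' :: "real \<Rightarrow> real"
  assumes "a \<le> b" and "continuous_on {a..b} f" "continuous_on {a..b} g"
    and "\<And>x. a < x \<Longrightarrow> x < b \<Longrightarrow> (f has_real_derivative f' x) (at x)"
    and "\<And>x. a < x \<Longrightarrow> x < b \<Longrightarrow> (g has_real_derivative g' x) (at x)"
    and "\<And>x. a < x \<Longrightarrow> x < b \<Longrightarrow> \<bar>f' x\<bar> \<le> g' x"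
  shows "\<bar>f b - f a\<bar> \<le> g b - g a"
proof -
  have "g a + f a \<le> g b + f b"
  proof (rule DERIV_nonneg_imp_increasing_open[OF \<open>a \<le> b\<close>])
    fix x assume x: "a < x" "x < b"
    show "\<exists>y. ((\<lambda>x. g x + f x) has_real_derivative y) (at x) \<and> 0 \<le> y"
      using assms(4-6)[OF x] by (intro exI[of _ "g' x + f' x"]) (auto intro: DERIV_add simp: abs_le_iff)
  qed (intro continuous_on_add assms)
  moreover have "g a - f a \<le> g b - f b"
  proof (rule DERIV_nonneg_imp_increasing_open[OF \<open>a \<le> b\<close>])
    fix x assume x: "a < x" "x < b"
    show "\<exists>y. ((\<lambda>x. g x - f x) has_real_derivative y) (at x) \<and> 0 \<le> y"
      using assms(4-6)[OF x] by (intro exI[of _ "g' x - f' x"]) (auto intro: DERIV_diff simp: abs_le_iff)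
  qed (intro continuous_on_diff assms)
  ultimately show ?thesis by linarith
qed

lemma abs_le_powr_of_abs_deriv_le_powr:
  fixes f f' :: "real \<Rightarrow> real"
  assumes deriv: "\<And>x. x \<in> {0<..1} \<Longrightarrow> (f has_real_derivative f' x) (at x within {0<..1})"
    and "\<beta> < 0" "A \<ge> 0"
    and bound: "\<And>x. x \<in> {0<..1} \<Longrightarrow> \<bar>f' x\<bar> \<le> A * x powr (\<beta> - 1)"
    and s: "s \<in> {0<..1}"
  shows "\<bar>f s\<bar> \<le> (\<bar>f 1\<bar> + A / (-\<beta>)) * s powr \<beta>"
proof -
  have "continuous_on {0<..1} f"
    using deriv by (meson DERIV_continuous continuous_on_eq_continuous_within)
  then have cont: "continuous_on {s..1} f"
    by (rule continuous_on_subset) (use s in auto)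
  have "at x within {0<..1} = at x" if "x \<in> {0<..<1}" for x :: real
    by (rule at_within_open_subset[OF that]) auto
  then have deriv_at: "(f has_real_derivative f' x) (at x)" if "s < x" "x < 1" for x
    using deriv[of x] that s by auto
  have powr_deriv: "((\<lambda>x. A / \<beta> * x powr \<beta>) has_real_derivative A * x powr (\<beta> - 1)) (at x)"
    if "0 < x" for x
    using that \<open>\<beta> < 0\<close> by (auto intro!: derivative_eq_intros simp: powr_diff)
  have "\<bar>f 1 - f s\<bar> \<le> A / \<beta> * 1 powr \<beta> - A / \<beta> * s powr \<beta>"
    using s deriv_at bound powr_deriv \<open>\<beta> < 0\<close>
    by (intro abs_diff_le_of_abs_deriv_le[where f'=f' and g'="\<lambda>x. A * x powr (\<beta> - 1)"] cont)
      (auto intro!: continuous_intros)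
  also have "\<dots> \<le> A / (-\<beta>) * s powr \<beta>"
    using \<open>\<beta> < 0\<close> \<open>A \<ge> 0\<close> by (simp add: divide_nonneg_neg)
  finally have "\<bar>f s\<bar> \<le> \<bar>f 1\<bar> + A / (-\<beta>) * s powr \<beta>"
    by linarith
  moreover have "\<bar>f 1\<bar> \<le> \<bar>f 1\<bar> * s powr \<beta>"
    using powr_mono2'[of \<beta> s 1] s \<open>\<beta> < 0\<close> by (simp add: mult_le_cancel_left1)
  ultimately show ?thesis
    unfolding distrib_right by linarith
qed

lemma powr_bound_absorbs_const:
  fixes x e K c :: real
  assumes "0 < x" "x \<le> 1" "e \<le> 0"
  shows "K * x powr e + c \<le> (1 + \<bar>K\<bar> + \<bar>c\<bar>) * x powr e"
proof -
  have "1 \<le> x powr e"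
    using powr_mono2'[of e x 1] assms by simp
  then have "\<bar>c\<bar> \<le> \<bar>c\<bar> * x powr e"
    by (simp add: mult_le_cancel_left1)
  moreover have "K * x powr e \<le> \<bar>K\<bar> * x powr e"
    by (intro mult_right_mono) auto
  ultimately show ?thesis
    using \<open>1 \<le> x powr e\<close> abs_ge_self[of c] by (simp add: distrib_right)
qed

lemma hderiv_powr_bound_step:
  fixes \<alpha> A :: real and \<phi> :: "real \<Rightarrow> real"
  assumes diff: "\<forall>x\<in>{0<..1}. (phider m \<phi> has_vector_derivative phider (Suc m) \<phi> x) (at x within {0<..1})"
    and "real m > \<alpha>" "A \<ge> 0"
    and bound: "\<forall>x\<in>{0<..1}. \<bar>phider (Suc m) \<phi> x\<bar> \<le> A * x powr (\<alpha> - real (Suc m))"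
    and x: "x \<in> {0<..1}"
  shows "\<bar>phider m \<phi> x\<bar> \<le> (\<bar>phider m \<phi> 1\<bar> + A / (real m - \<alpha>)) * x powr (\<alpha> - real m)"
proof -
  have "\<bar>phider m \<phi> x\<bar> \<le> (\<bar>phider m \<phi> 1\<bar> + A / - (\<alpha> - real m)) * x powr (\<alpha> - real m)"
  proof (rule abs_le_powr_of_abs_deriv_le_powr[where f'="phider (Suc m) \<phi>"])
    show "(phider m \<phi> has_real_derivative phider (Suc m) \<phi> y) (at y within {0<..1})"
      if "y \<in> {0<..1}" for y
      using diff that by (simp add: has_real_derivative_iff_has_vector_derivative)
    show "\<bar>phider (Suc m) \<phi> y\<bar> \<le> A * y powr (\<alpha> - real m - 1)" if "y \<in> {0<..1}" for y
      using bspec[OF bound that] by (simp add: diff_diff_add add.commute)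
  qed (use assms in simp_all)
  then show ?thesis by simp
qed

lemma hderiv_powr_bounds:
  fixes \<alpha> K c :: real and \<phi> :: "real \<Rightarrow> real"
  assumes alpha: "0 < \<alpha>" "\<alpha> < 1"
    and diff: "\<forall>k<4. \<forall>x\<in>{0<..1}.
        (phider k \<phi> has_vector_derivative phider (Suc k) \<phi> x) (at x within {0<..1})"
    and bound4: "\<forall>x\<in>{0<..1}. \<bar>phider 4 \<phi> x\<bar> \<le> K * x powr (\<alpha> - 4) + c"
  shows "\<exists>A>0. \<forall>m\<in>{1..4}. \<forall>x\<in>{0<..1}. \<bar>phider m \<phi> x\<bar> \<le> A * x powr (\<alpha> - real m)"
proof -
  have "\<exists>A>0. \<forall>k\<in>{m..4}. \<forall>x\<in>{0<..1}. \<bar>phider k \<phi> x\<bar> \<le> A * x powr (\<alpha> - real k)"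
    if "1 \<le> m" "m \<le> 4" for m
    using \<open>m \<le> 4\<close> \<open>1 \<le> m\<close>
  proof (induction m rule: inc_induct)
    case base
    have "\<forall>k\<in>{4..4}. \<forall>x\<in>{0<..1}. \<bar>phider k \<phi> x\<bar> \<le> (1 + \<bar>K\<bar> + \<bar>c\<bar>) * x powr (\<alpha> - real k)"
      using bound4 powr_bound_absorbs_const[of _ "\<alpha> - 4" K c] alpha by force
    moreover have "0 < 1 + \<bar>K\<bar> + \<bar>c\<bar>" by linarith
    ultimately show ?case by blast
  next
    case (step m)
    then have "1 \<le> m" "m < 4" by simp_all
    from step obtain A where "A > 0"
      and A: "\<forall>k\<in>{Suc m..4}. \<forall>x\<in>{0<..1}. \<bar>phider k \<phi> x\<bar> \<le> A * x powr (\<alpha> - real k)"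
      by (metis le_SucI)
    define B where "B = \<bar>phider m \<phi> 1\<bar> + A / (real m - \<alpha>)"
    have "\<bar>phider k \<phi> x\<bar> \<le> max A B * x powr (\<alpha> - real k)"
      if "k \<in> {m..4}" "x \<in> {0<..1}" for k x
    proof (cases "k = m")
      case True
      have "\<forall>x\<in>{0<..1}. \<bar>phider (Suc m) \<phi> x\<bar> \<le> A * x powr (\<alpha> - real (Suc m))"
        using bspec[OF A, of "Suc m"] \<open>m < 4\<close> by simp
      then have "\<bar>phider m \<phi> x\<bar> \<le> B * x powr (\<alpha> - real m)"
        unfolding B_def using diff \<open>m < 4\<close> \<open>1 \<le> m\<close> alpha \<open>A > 0\<close> that(2)
        by (intro hderiv_powr_bound_step) auto
      moreover have "B * x powr (\<alpha> - real m) \<le> max A B * x powr (\<alpha> - real m)"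
        by (intro mult_right_mono) auto
      ultimately show ?thesis unfolding True by linarith
    next
      case False
      have "A * x powr (\<alpha> - real k) \<le> max A B * x powr (\<alpha> - real k)"
        by (intro mult_right_mono) auto
      moreover have "k \<in> {Suc m..4}" using that(1) False by auto
      ultimately show ?thesis using A that(2) by (meson order.trans)
    qed
    moreover have "max A B > 0" using \<open>A > 0\<close> by simp
    ultimately show ?case by blast
  qed
  from this[of 1] show ?thesis by simp
qed

section \<open>The blending polynomials\<close>

lemma binomial_add_Suc_mult:
  "real (Suc (k + l) choose l) * real (Suc k) = real ((k + l) choose l) * real (Suc k + l)"
proof -
  have "Suc (k + l) * ((k + l) choose k) = (Suc (k + l) choose Suc k) * Suc k"
    by (rule Suc_times_binomial_eq)
  moreover have "(k + l) choose k = (k + l) choose l"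
    using binomial_symmetric[of k "k + l"] by simp
  moreover have "Suc (k + l) choose Suc k = Suc (k + l) choose l"
    using binomial_symmetric[of l "Suc (k + l)"] by simp
  ultimately have "(Suc (k + l) choose l) * Suc k = ((k + l) choose l) * (Suc k + l)"
    by (simp add: mult.commute)
  then show ?thesis by (metis of_nat_mult)
qed

text \<open>\<open>H_4(x;\<phi>,a,b) = \<phi>(a) + \<Sum>_(m=1..4) \<phi>^(m)(a)/m! (b-a)^m P_m((x-a)/(b-a))\<close> where
  \<open>P_m(t) = t^m (1-t)^5 \<Sum>_(l=0..4-m) C(4+l,l) t^l\<close>. At \<open>t = 0\<close> the first and second derivatives of the
  \<open>P_m\<close> pick out \<open>\<phi>'(a)\<close> and \<open>\<phi>''(a)\<close>, and the factor \<open>(1-t)^5\<close> makes them flat at \<open>t = 1\<close>.\<close>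

definition hermite_factor :: "nat \<Rightarrow> real poly" where
  "hermite_factor m = (\<Sum>l=0..4-m. monom (real ((4 + l) choose l)) l)"

definition hermite_basis :: "nat \<Rightarrow> real poly" where
  "hermite_basis m = monom 1 m * [:1, -1:] ^ 5 * hermite_factor m"

lemma poly_hermite_basis:
  "poly (hermite_basis m) t = t ^ m * (1 - t) ^ 5 * (\<Sum>l=0..4-m. real ((4 + l) choose l) * t ^ l)"
  unfolding hermite_basis_def hermite_factor_def by (simp add: poly_monom poly_sum)

lemma HL_eq_hermite_basis:
  assumes "b \<noteq> a"
  shows "HL 4 x \<phi> a b =
    \<phi> a + (\<Sum>m=1..4. phider m \<phi> a / fact m * (b - a) ^ m * poly (hermite_basis m) ((x - a) / (b - a)))"
proof -
  define t where "t = (x - a) / (b - a)"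
  have "(\<Sum>l=0..4-m. (real 4 + 1) / (real 4 + real l + 1) * Bernstein (4 + l + 1) l t)
      = (1 - t) ^ 5 * (\<Sum>l=0..4-m. real ((4 + l) choose l) * t ^ l)" for m
    unfolding sum_distrib_left
  proof (rule sum.cong[OF refl])
    fix l
    have "real (Suc (4 + l) choose l) = real ((4 + l) choose l) * (5 + real l) / 5"
      using binomial_add_Suc_mult[of 4 l] by (simp add: field_simps)
    then show "(real 4 + 1) / (real 4 + real l + 1) * Bernstein (4 + l + 1) l t =
        (1 - t) ^ 5 * (real ((4 + l) choose l) * t ^ l)"
      unfolding Bernstein_def by (simp add: field_simps)
  qed
  moreover have "x - a = (b - a) * t"
    unfolding t_def using assms by simp
  ultimately show ?thesis
    unfolding HL_def t_def[symmetric] poly_hermite_basis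
    by (simp add: power_mult_distrib mult.assoc)
qed

lemma poly_pderivs_mult_at_triple_root:
  assumes "poly B x = 0" "poly (pderiv B) x = 0" "poly (pderiv (pderiv B)) x = 0"
  shows "poly (A * B) x = 0" "poly (pderiv (A * B)) x = 0"
    "poly (pderiv (pderiv (A * B))) x = (0 :: 'a :: idom)"
  using assms by (simp_all add: pderiv_mult pderiv_add)

lemma hermite_basis_endpoint_values:
  assumes "m \<in> {1..4}"
  shows "poly (hermite_basis m) 0 = 0"
    "poly (pderiv (hermite_basis m)) 0 = (if m = 1 then 1 else 0)"
    "poly (pderiv (pderiv (hermite_basis m))) 0 = (if m = 2 then 2 else 0)"
    "poly (pderiv (hermite_basis m)) 1 = 0"
    "poly (pderiv (pderiv (hermite_basis m))) 1 = 0"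
proof -
  define C where "C = hermite_factor m * [:1, -1:] ^ 5"
  have P: "hermite_basis m = monom 1 m * C"
    unfolding hermite_basis_def C_def by (simp add: mult_ac)
  have "poly ([:1, -1:] ^ 5) (1::real) = 0" "poly (pderiv ([:1, -1:] ^ 5)) (1::real) = 0"
    "poly (pderiv (pderiv ([:1, -1:] ^ 5))) (1::real) = 0"
    by (simp_all add: pderiv_mult pderiv_power_Suc numeral_eq_Suc pderiv_pCons)
  then have C1: "poly C 1 = 0" "poly (pderiv C) 1 = 0" "poly (pderiv (pderiv C)) 1 = 0"
    unfolding C_def by (rule poly_pderivs_mult_at_triple_root)+
  show "poly (pderiv (hermite_basis m)) 1 = 0" "poly (pderiv (pderiv (hermite_basis m))) 1 = 0"
    unfolding P using poly_pderivs_mult_at_triple_root[OF C1] by auto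
  have R0: "poly ([:1, -1:] ^ 5) (0::real) = 1" "poly (pderiv ([:1, -1:] ^ 5)) (0::real) = -5"
    by (simp_all add: pderiv_mult pderiv_power_Suc numeral_eq_Suc pderiv_pCons)
  have Q0: "poly (hermite_factor m) 0 = 1"
    unfolding hermite_factor_def poly_sum poly_monom using assms
    by (subst sum.atLeast_Suc_atMost) (auto simp: sum.neutral)
  have C0: "poly C 0 = 1" unfolding C_def using Q0 R0 by simp
  have "poly (pderiv (hermite_factor 1)) 0 = 5"
    unfolding hermite_factor_def
    by (simp add: numeral_eq_Suc sum.atLeast0_atMost_Suc pderiv_add pderiv_monom poly_monom)
  then have C'0: "m = 1 \<Longrightarrow> poly (pderiv C) 0 = 0"
    unfolding C_def using Q0 R0 by (simp add: pderiv_mult)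
  have m: "m = 1 \<or> m = 2 \<or> m = 3 \<or> m = 4" using assms by auto
  show "poly (hermite_basis m) 0 = 0"
    using m by (auto simp: P poly_monom)
  show "poly (pderiv (hermite_basis m)) 0 = (if m = 1 then 1 else 0)"
    using m C0 by (auto simp: P pderiv_mult pderiv_monom poly_monom)
  show "poly (pderiv (pderiv (hermite_basis m))) 0 = (if m = 2 then 2 else 0)"
    using m C0 C'0 by (auto simp: P pderiv_mult pderiv_monom poly_monom pderiv_add)
qed

lemma hermite_basis_derivs_bounded:
  "\<exists>G>0. \<forall>m\<in>{1..4}. \<forall>t\<in>{0..1}.
     \<bar>poly (pderiv (hermite_basis m)) t\<bar> \<le> G \<and> \<bar>poly (pderiv (pderiv (hermite_basis m))) t\<bar> \<le> G"
proof -
  define q where "q m t = \<bar>poly (pderiv (hermite_basis m)) t\<bar> + \<bar>poly (pderiv (pderiv (hermite_basis m))) t\<bar>"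
    for m t
  have "compact ((\<lambda>t. \<Sum>m=1..4. q m t) ` {0..1})"
    unfolding q_def by (intro compact_continuous_image continuous_intros) auto
  then obtain G where "\<forall>y\<in>(\<lambda>t. \<Sum>m=1..4. q m t) ` {0..1}. norm y \<le> G"
    using compact_imp_bounded bounded_iff by metis
  then have G: "\<forall>t\<in>{0..1}. \<bar>\<Sum>m=1..4. q m t\<bar> \<le> G"
    by simp
  have "q m t \<le> (\<Sum>m=1..4. q m t)" if "m \<in> {1..4}" for m t
    using that unfolding q_def by (intro member_le_sum) auto
  then have "\<forall>m\<in>{1..4}. \<forall>t\<in>{0..1}. \<bar>poly (pderiv (hermite_basis m)) t\<bar> \<le> max 1 G
      \<and> \<bar>poly (pderiv (pderiv (hermite_basis m))) t\<bar> \<le> max 1 G"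
    using G unfolding q_def by (smt (verit))
  then show ?thesis by (intro exI[of _ "max 1 G"]) auto
qed

definition HL' :: "(real \<Rightarrow> real) \<Rightarrow> real \<Rightarrow> real \<Rightarrow> real \<Rightarrow> real" where
  "HL' \<phi> a b x = (\<Sum>m=1..4. phider m \<phi> a / fact m * (b - a) ^ m *
     poly (pderiv (hermite_basis m)) ((x - a) / (b - a)) / (b - a))"

definition HL'' :: "(real \<Rightarrow> real) \<Rightarrow> real \<Rightarrow> real \<Rightarrow> real \<Rightarrow> real" where
  "HL'' \<phi> a b x = (\<Sum>m=1..4. phider m \<phi> a / fact m * (b - a) ^ m *
     poly (pderiv (pderiv (hermite_basis m))) ((x - a) / (b - a)) / (b - a)\<^sup>2)"

lemma has_real_derivative_HL:
  assumes "b \<noteq> a"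
  shows "((\<lambda>x. HL 4 x \<phi> a b) has_real_derivative HL' \<phi> a b x) (at x)"
proof -
  have "((\<lambda>x. (x - a) / (b - a)) has_real_derivative 1 / (b - a)) (at x)"
    using assms by (auto intro!: derivative_eq_intros)
  from DERIV_chain2[OF poly_DERIV this]
  have "((\<lambda>x. \<phi> a + (\<Sum>m=1..4. phider m \<phi> a / fact m * (b - a) ^ m * poly (hermite_basis m) ((x - a) / (b - a))))
      has_real_derivative 0 + (\<Sum>m=1..4. phider m \<phi> a / fact m * (b - a) ^ m *
        (poly (pderiv (hermite_basis m)) ((x - a) / (b - a)) * (1 / (b - a))))) (at x)"
    by (intro DERIV_add DERIV_const DERIV_sum DERIV_cmult)
  then show ?thesis
    unfolding HL_eq_hermite_basis[OF assms] HL'_def by simp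
qed

lemma has_real_derivative_HL':
  assumes "b \<noteq> a"
  shows "(HL' \<phi> a b has_real_derivative HL'' \<phi> a b x) (at x)"
proof -
  have "((\<lambda>x. (x - a) / (b - a)) has_real_derivative 1 / (b - a)) (at x)"
    using assms by (auto intro!: derivative_eq_intros)
  from DERIV_chain2[OF poly_DERIV this]
  have "((\<lambda>x. \<Sum>m=1..4. phider m \<phi> a / fact m * (b - a) ^ m *
        poly (pderiv (hermite_basis m)) ((x - a) / (b - a)) / (b - a))
      has_real_derivative (\<Sum>m=1..4. phider m \<phi> a / fact m * (b - a) ^ m *
        (poly (pderiv (pderiv (hermite_basis m))) ((x - a) / (b - a)) * (1 / (b - a))) / (b - a))) (at x)"
    by (intro DERIV_sum DERIV_cdivide DERIV_cmult)
  then show ?thesis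
    unfolding HL'_def[abs_def] HL''_def by (simp add: power2_eq_square mult.assoc)
qed

lemma HL_endpoint_values:
  assumes "b \<noteq> a"
  shows "HL 4 a \<phi> a b = \<phi> a" "HL' \<phi> a b a = phider 1 \<phi> a" "HL'' \<phi> a b a = phider 2 \<phi> a"
    "HL' \<phi> a b b = 0" "HL'' \<phi> a b b = 0"
proof -
  have ba: "b - a \<noteq> 0" using assms by simp
  show "HL 4 a \<phi> a b = \<phi> a"
    unfolding HL_eq_hermite_basis[OF assms] using hermite_basis_endpoint_values(1) by simp
  have "HL' \<phi> a b a = (\<Sum>m=1..(4::nat). if m = 1 then phider 1 \<phi> a else 0)"
    unfolding HL'_def using hermite_basis_endpoint_values(2) ba by (intro sum.cong) auto
  then show "HL' \<phi> a b a = phider 1 \<phi> a" by (simp add: sum.delta)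
  have "HL'' \<phi> a b a = (\<Sum>m=1..(4::nat). if m = 2 then phider 2 \<phi> a else 0)"
    unfolding HL''_def using hermite_basis_endpoint_values(3) ba
    by (intro sum.cong) (auto simp: power2_eq_square)
  then show "HL'' \<phi> a b a = phider 2 \<phi> a" by (simp add: sum.delta)
  show "HL' \<phi> a b b = 0" "HL'' \<phi> a b b = 0"
    unfolding HL'_def HL''_def using hermite_basis_endpoint_values(4,5) ba
    by (auto intro: sum.neutral)
qed

lemma power_div_power_le_powr:
  fixes a h :: real
  assumes "a > 0" "a / 2 \<le> \<bar>h\<bar>" "\<bar>h\<bar> \<le> a"
  shows "\<bar>h\<bar> ^ m / \<bar>h\<bar> ^ j \<le> 2 ^ j * a powr (real m - real j)"
proof -
  have "\<bar>h\<bar> ^ m / \<bar>h\<bar> ^ j \<le> a ^ m / (a / 2) ^ j"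
    using assms by (intro frac_le power_mono) auto
  also have "\<dots> = 2 ^ j * a powr (real m - real j)"
    using assms by (simp add: powr_diff powr_realpow power_divide)
  finally show ?thesis .
qed

lemma abs_hermite_summand_le:
  fixes a h d P A G \<alpha> :: real
  assumes "a > 0" "a / 2 \<le> \<bar>h\<bar>" "\<bar>h\<bar> \<le> a" "\<bar>d\<bar> \<le> A * a powr (\<alpha> - real m)" "\<bar>P\<bar> \<le> G"
  shows "\<bar>d / fact m * h ^ m * P / h ^ j\<bar> \<le> 2 ^ j * A * G * a powr (\<alpha> - real j)"
proof -
  have "\<bar>d / fact m * h ^ m * P / h ^ j\<bar> = \<bar>d\<bar> / fact m * (\<bar>h\<bar> ^ m / \<bar>h\<bar> ^ j) * \<bar>P\<bar>"
    by (simp add: abs_mult power_abs)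
  also have "\<dots> \<le> \<bar>d\<bar> * (\<bar>h\<bar> ^ m / \<bar>h\<bar> ^ j) * \<bar>P\<bar>"
    using fact_ge_1[of m] by (intro mult_right_mono) (auto simp: divide_le_eq mult_le_cancel_left1)
  also have "\<dots> \<le> (A * a powr (\<alpha> - real m)) * (2 ^ j * a powr (real m - real j)) * G"
    using assms power_div_power_le_powr[OF assms(1-3)]
    by (intro mult_mono) (auto intro: order.trans[OF abs_ge_zero])
  also have "\<dots> = 2 ^ j * A * G * (a powr (\<alpha> - real m) * a powr (real m - real j))"
    by (simp add: mult_ac)
  also have "a powr (\<alpha> - real m) * a powr (real m - real j) = a powr (\<alpha> - real j)"
    by (simp add: powr_add[symmetric])
  finally show ?thesis .
qed

lemma HL'_HL''_bounds:
  fixes a b x A G \<alpha> :: real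
  assumes "a > 0" "a / 2 \<le> \<bar>b - a\<bar>" "\<bar>b - a\<bar> \<le> a"
    and t: "0 \<le> (x - a) / (b - a)" "(x - a) / (b - a) \<le> 1"
    and A: "\<forall>m\<in>{1..4}. \<bar>phider m \<phi> a\<bar> \<le> A * a powr (\<alpha> - real m)"
    and G: "\<forall>m\<in>{1..4}. \<forall>t\<in>{0..1}.
      \<bar>poly (pderiv (hermite_basis m)) t\<bar> \<le> G \<and> \<bar>poly (pderiv (pderiv (hermite_basis m))) t\<bar> \<le> G"
  shows "\<bar>HL' \<phi> a b x\<bar> \<le> 8 * A * G * a powr (\<alpha> - 1)"
    "\<bar>x * HL'' \<phi> a b x\<bar> \<le> 32 * A * G * a powr (\<alpha> - 1)"
proof -
  have "\<bar>HL' \<phi> a b x\<bar> \<le> (\<Sum>m=1..4. \<bar>phider m \<phi> a / fact m * (b - a) ^ m *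
      poly (pderiv (hermite_basis m)) ((x - a) / (b - a)) / (b - a) ^ 1\<bar>)"
    unfolding HL'_def power_one_right by (rule sum_abs)
  also have "\<dots> \<le> real (card {1..4::nat}) * (2 ^ 1 * A * G * a powr (\<alpha> - real 1))"
    using assms by (intro sum_bounded_above abs_hermite_summand_le) auto
  finally show "\<bar>HL' \<phi> a b x\<bar> \<le> 8 * A * G * a powr (\<alpha> - 1)" by simp
  have "\<bar>HL'' \<phi> a b x\<bar> \<le> (\<Sum>m=1..4. \<bar>phider m \<phi> a / fact m * (b - a) ^ m *
      poly (pderiv (pderiv (hermite_basis m))) ((x - a) / (b - a)) / (b - a) ^ 2\<bar>)"
    unfolding HL''_def by (rule sum_abs)
  also have "\<dots> \<le> real (card {1..4::nat}) * (2 ^ 2 * A * G * a powr (\<alpha> - real 2))"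
    using assms by (intro sum_bounded_above abs_hermite_summand_le) auto
  finally have HL'': "\<bar>HL'' \<phi> a b x\<bar> \<le> 16 * A * G * a powr (\<alpha> - 2)" by simp
  define t where "t = (x - a) / (b - a)"
  have t01: "0 \<le> t" "t \<le> 1" using t unfolding t_def by auto
  have "\<bar>x\<bar> = \<bar>a + (b - a) * t\<bar>"
    unfolding t_def using assms by auto
  also have "\<dots> \<le> a + \<bar>b - a\<bar> * t"
    using abs_triangle_ineq[of a "(b - a) * t"] \<open>a > 0\<close> t01 by (simp add: abs_mult)
  also have "\<dots> \<le> 2 * a"
    using assms t01 mult_mono[of "\<bar>b - a\<bar>" a t 1] by simp
  finally have "\<bar>x\<bar> \<le> 2 * a" .
  then have "\<bar>x * HL'' \<phi> a b x\<bar> \<le> 2 * a * (16 * A * G * a powr (\<alpha> - 2))"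
    unfolding abs_mult using HL'' by (intro mult_mono) auto
  also have "\<dots> = 32 * A * G * (a * a powr (\<alpha> - 2))" by simp
  also have "a * a powr (\<alpha> - 2) = a powr (\<alpha> - 1)"
    using \<open>a > 0\<close> by (simp add: powr_mult_base)
  finally show "\<bar>x * HL'' \<phi> a b x\<bar> \<le> 32 * A * G * a powr (\<alpha> - 1)" .
qed

section \<open>The extension and its derivatives\<close>

lemma has_real_derivative_at_of_left_right:
  fixes f :: "real \<Rightarrow> real"
  assumes "(f has_real_derivative D) (at x within {..x})" "(f has_real_derivative D) (at x within {x..})"
  shows "(f has_real_derivative D) (at x)"
proof -
  have "((\<lambda>y. (f y - f x) / (y - x)) \<longlongrightarrow> D) (at x within {..x} \<union> {x..})"
    using assms by (simp add: Lim_within_Un has_field_derivative_iff)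
  moreover have "{..x} \<union> {x..} = UNIV" by auto
  ultimately show ?thesis by (simp add: has_field_derivative_iff)
qed

lemma has_real_derivative_glue:
  fixes F L R :: "real \<Rightarrow> real"
  assumes "d > 0"
    and L: "\<And>y. x - d < y \<Longrightarrow> y \<le> x \<Longrightarrow> L y = F y"
    and R: "\<And>y. x \<le> y \<Longrightarrow> y < x + d \<Longrightarrow> R y = F y"
    and "(L has_real_derivative D) (at x within {..x})" "(R has_real_derivative D) (at x within {x..})"
  shows "(F has_real_derivative D) (at x)"
proof (rule has_real_derivative_at_of_left_right)
  show "(F has_real_derivative D) (at x within {..x})"
    by (rule has_field_derivative_transform_within[OF assms(4) \<open>d > 0\<close>]) (auto simp: L dist_real_def)
  show "(F has_real_derivative D) (at x within {x..})"
    by (rule has_field_derivative_transform_within[OF assms(5) \<open>d > 0\<close>]) (auto simp: R dist_real_def)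
qed

lemma has_real_derivative_five_pieces:
  fixes G H g G' H' g' :: "real \<Rightarrow> real" and \<Delta> c1 c2 :: real
  assumes \<Delta>: "0 < \<Delta>" "\<Delta> < 1"
    and G: "\<And>y. (G has_real_derivative G' y) (at y)"
    and H: "\<And>y. (H has_real_derivative H' y) (at y)"
    and g: "\<And>y. y \<in> {0<..1} \<Longrightarrow> (g has_real_derivative g' y) (at y within {0<..1})"
    and "c1 = G (\<Delta>/2)" "G' (\<Delta>/2) = 0" "G \<Delta> = g \<Delta>" "G' \<Delta> = g' \<Delta>"
    and "H 1 = g 1" "H' 1 = g' 1" "c2 = H 2" "H' 2 = 0"
  shows "((\<lambda>y. if y \<le> \<Delta>/2 then c1 else if y < \<Delta> then G y else if y \<le> 1 then g y
             else if y < 2 then H y else c2)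
     has_real_derivative
     (if x \<le> \<Delta>/2 then 0 else if x < \<Delta> then G' x else if x \<le> 1 then g' x
      else if x < 2 then H' x else 0)) (at x)"
proof -
  have g_at: "(g has_real_derivative g' y) (at y)" if "0 < y" "y < 1" for y
  proof -
    have "at y within {0<..1} = at y"
      by (rule at_within_open_subset[of _ "{0<..<1}"]) (use that in auto)
    then show ?thesis using g[of y] that by simp
  qed
  have "at 1 within {0<..1} = at (1::real) within {..1}"
    by (rule at_within_nhd[where S="{0<..}"]) auto
  then have g_1: "(g has_real_derivative g' 1) (at 1 within {..1})"
    using g[of 1] by simp
  note within = has_field_derivative_at_within
  consider "x < \<Delta>/2" | "x = \<Delta>/2" | "\<Delta>/2 < x \<and> x < \<Delta>" | "x = \<Delta>" | "\<Delta> < x \<and> x < 1" | "x = 1"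
    | "1 < x \<and> x < 2" | "x = 2" | "2 < x" by linarith
  then show ?thesis
  proof cases
    case 1
    then show ?thesis
      by (intro has_real_derivative_glue[where L="\<lambda>_. c1" and R="\<lambda>_. c1" and d="\<Delta>/2 - x"]) auto
  next
    case 2
    have "(G has_real_derivative 0) (at x within {x..})"
      using G[of x] \<open>G' (\<Delta>/2) = 0\<close> 2 by (auto intro: within)
    with 2 show ?thesis using assms
      by (intro has_real_derivative_glue[where L="\<lambda>_. c1" and R=G and d="\<Delta>/2"]) (auto intro: within)
  next
    case 3
    then show ?thesis using \<Delta> G
      by (intro has_real_derivative_glue[where L=G and R=G and d="min (x - \<Delta>/2) (\<Delta> - x)"])
        (auto intro: within)
  next
    case 4
    then show ?thesis using assms G[of \<Delta>] g_at[of \<Delta>]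
      by (intro has_real_derivative_glue[where L=G and R=g and d="min (\<Delta>/2) (1 - \<Delta>)"])
        (auto intro: within)
  next
    case 5
    then show ?thesis using \<Delta> g_at[of x]
      by (intro has_real_derivative_glue[where L=g and R=g and d="min (x - \<Delta>) (1 - x)"])
        (auto intro: within)
  next
    case 6
    then show ?thesis using assms g_1 H[of 1]
      by (intro has_real_derivative_glue[where L=g and R=H and d="1 - \<Delta>"]) (auto intro: within)
  next
    case 7
    then show ?thesis using \<Delta> H
      by (intro has_real_derivative_glue[where L=H and R=H and d="min (x - 1) (2 - x)"])
        (auto intro: within)
  next
    case 8
    then show ?thesis using assms H[of 2]
      by (intro has_real_derivative_glue[where L=H and R="\<lambda>_. c2" and d=1]) (auto intro: within)
  next
    case 9
    then show ?thesis using \<Delta>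
      by (intro has_real_derivative_glue[where L="\<lambda>_. c2" and R="\<lambda>_. c2" and d="x - 2"]) auto
  qed
qed

definition phibar' :: "(real \<Rightarrow> real) \<Rightarrow> real \<Rightarrow> real \<Rightarrow> real" where
  "phibar' \<phi> \<Delta> x =
     (if x \<le> \<Delta>/2 then 0 else if x < \<Delta> then HL' \<phi> \<Delta> (\<Delta>/2) x else if x \<le> 1 then phider 1 \<phi> x
      else if x < 2 then HL' \<phi> 1 2 x else 0)"

definition phibar'' :: "(real \<Rightarrow> real) \<Rightarrow> real \<Rightarrow> real \<Rightarrow> real" where
  "phibar'' \<phi> \<Delta> x =
     (if x \<le> \<Delta>/2 then 0 else if x < \<Delta> then HL'' \<phi> \<Delta> (\<Delta>/2) x else if x \<le> 1 then phider 2 \<phi> x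
      else if x < 2 then HL'' \<phi> 1 2 x else 0)"

lemma has_real_derivative_phibar:
  assumes \<Delta>: "0 < \<Delta>" "\<Delta> < 1"
    and diff: "\<forall>k<4. \<forall>x\<in>{0<..1}.
        (phider k \<phi> has_vector_derivative phider (Suc k) \<phi> x) (at x within {0<..1})"
  shows "(phibar \<phi> \<Delta> has_real_derivative phibar' \<phi> \<Delta> x) (at x)"
proof -
  have e: "phibar \<phi> \<Delta> = (\<lambda>y. if y \<le> \<Delta>/2 then HL 4 (\<Delta>/2) \<phi> \<Delta> (\<Delta>/2) else if y < \<Delta> then HL 4 y \<phi> \<Delta> (\<Delta>/2)
      else if y \<le> 1 then \<phi> y else if y < 2 then HL 4 y \<phi> 1 2 else HL 4 2 \<phi> 1 2)"
    by (rule ext) (simp add: phibar_def)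
  have g: "(\<phi> has_real_derivative phider 1 \<phi> y) (at y within {0<..1})" if "y \<in> {0<..1}" for y
    using diff that by (auto simp: has_real_derivative_iff_has_vector_derivative dest!: spec[of _ 0])
  show ?thesis
    unfolding e phibar'_def
    by (rule has_real_derivative_five_pieces[OF \<Delta> has_real_derivative_HL has_real_derivative_HL g])
      (use HL_endpoint_values[of "\<Delta>/2" \<Delta>] HL_endpoint_values[of 2 1] \<Delta> in auto)
qed

lemma has_real_derivative_phibar':
  assumes \<Delta>: "0 < \<Delta>" "\<Delta> < 1"
    and diff: "\<forall>k<4. \<forall>x\<in>{0<..1}.
        (phider k \<phi> has_vector_derivative phider (Suc k) \<phi> x) (at x within {0<..1})"
  shows "(phibar' \<phi> \<Delta> has_real_derivative phibar'' \<phi> \<Delta> x) (at x)"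
proof -
  have e: "phibar' \<phi> \<Delta> = (\<lambda>y. if y \<le> \<Delta>/2 then 0 else if y < \<Delta> then HL' \<phi> \<Delta> (\<Delta>/2) y
      else if y \<le> 1 then phider 1 \<phi> y else if y < 2 then HL' \<phi> 1 2 y else 0)"
    by (rule ext) (simp add: phibar'_def)
  have g: "(phider 1 \<phi> has_real_derivative phider 2 \<phi> y) (at y within {0<..1})"
    if "y \<in> {0<..1}" for y
    using diff that
    by (auto simp: has_real_derivative_iff_has_vector_derivative numeral_2_eq_2 dest!: spec[of _ 1])
  show ?thesis
    unfolding e phibar''_def
    by (rule has_real_derivative_five_pieces[OF \<Delta> has_real_derivative_HL' has_real_derivative_HL' g])
      (use HL_endpoint_values[of "\<Delta>/2" \<Delta>] HL_endpoint_values[of 2 1] \<Delta> in auto)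
qed

lemma hderiv_1_2_powr_bounds:
  fixes \<alpha> A y :: real and \<phi> :: "real \<Rightarrow> real"
  assumes A: "\<forall>m\<in>{1..4}. \<forall>x\<in>{0<..1}. \<bar>phider m \<phi> x\<bar> \<le> A * x powr (\<alpha> - real m)"
    and y: "y \<in> {0<..1}"
  shows "\<bar>phider 1 \<phi> y\<bar> \<le> A * y powr (\<alpha> - 1)" "\<bar>y * phider 2 \<phi> y\<bar> \<le> A * y powr (\<alpha> - 1)"
proof -
  show "\<bar>phider 1 \<phi> y\<bar> \<le> A * y powr (\<alpha> - 1)"
    using bspec[OF bspec[OF A, of 1] y] by simp
  have "\<bar>y * phider 2 \<phi> y\<bar> \<le> y * (A * y powr (\<alpha> - 2))"
    unfolding abs_mult using bspec[OF bspec[OF A, of 2] y] y by (intro mult_mono) auto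
  also have "\<dots> = A * y powr (\<alpha> - 1)"
    using y by (simp add: powr_mult_base)
  finally show "\<bar>y * phider 2 \<phi> y\<bar> \<le> A * y powr (\<alpha> - 1)" .
qed

lemma phibar_deriv_bounds:
  fixes \<alpha> \<Delta> A G y :: real
  assumes alpha: "0 < \<alpha>" "\<alpha> < 1" and \<Delta>: "0 < \<Delta>" "\<Delta> < 1" and "A > 0" "G > 0"
    and A: "\<forall>m\<in>{1..4}. \<forall>x\<in>{0<..1}. \<bar>phider m \<phi> x\<bar> \<le> A * x powr (\<alpha> - real m)"
    and G: "\<forall>m\<in>{1..4}. \<forall>t\<in>{0..1}.
      \<bar>poly (pderiv (hermite_basis m)) t\<bar> \<le> G \<and> \<bar>poly (pderiv (pderiv (hermite_basis m))) t\<bar> \<le> G"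
    and "y \<ge> 0"
  shows "\<bar>phibar' \<phi> \<Delta> y\<bar> \<le> (64 * A * G + A) * max y \<Delta> powr (\<alpha> - 1)"
    "\<bar>y * phibar'' \<phi> \<Delta> y\<bar> \<le> (64 * A * G + A) * max y \<Delta> powr (\<alpha> - 1)"
proof -
  define K where "K = 64 * A * G + A"
  have "K \<ge> 0" "32 * A * G \<le> K" "A \<le> K"
    unfolding K_def using \<open>A > 0\<close> \<open>G > 0\<close> by simp_all
  have pos: "max y \<Delta> powr (\<alpha> - 1) > 0" using \<Delta> by simp
  consider "y \<le> \<Delta>/2" | "\<Delta>/2 < y \<and> y < \<Delta>" | "\<Delta> \<le> y \<and> y \<le> 1" | "1 < y \<and> y < 2" | "2 \<le> y"
    by linarith
  then have "\<bar>phibar' \<phi> \<Delta> y\<bar> \<le> K * max y \<Delta> powr (\<alpha> - 1) \<and>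
      \<bar>y * phibar'' \<phi> \<Delta> y\<bar> \<le> K * max y \<Delta> powr (\<alpha> - 1)"
  proof cases
    case 1
    then show ?thesis using \<open>K \<ge> 0\<close> pos by (simp add: phibar'_def phibar''_def)
  next
    case 2
    then have "max y \<Delta> = \<Delta>" "(y - \<Delta>) / (\<Delta>/2 - \<Delta>) \<in> {0..1}"
      using \<Delta> by (auto simp: field_simps)
    moreover have "\<forall>m\<in>{1..4}. \<bar>phider m \<phi> \<Delta>\<bar> \<le> A * \<Delta> powr (\<alpha> - real m)"
      using A \<Delta> by auto
    ultimately have "\<bar>HL' \<phi> \<Delta> (\<Delta>/2) y\<bar> \<le> 32 * A * G * max y \<Delta> powr (\<alpha> - 1)"
      "\<bar>y * HL'' \<phi> \<Delta> (\<Delta>/2) y\<bar> \<le> 32 * A * G * max y \<Delta> powr (\<alpha> - 1)"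
      using HL'_HL''_bounds[of \<Delta> "\<Delta>/2" y \<phi> A \<alpha> G] \<Delta> G \<open>A > 0\<close> \<open>G > 0\<close> pos by auto
    moreover have "32 * A * G * max y \<Delta> powr (\<alpha> - 1) \<le> K * max y \<Delta> powr (\<alpha> - 1)"
      using \<open>32 * A * G \<le> K\<close> pos by (intro mult_right_mono) auto
    ultimately have "\<bar>HL' \<phi> \<Delta> (\<Delta>/2) y\<bar> \<le> K * max y \<Delta> powr (\<alpha> - 1)"
      "\<bar>y * HL'' \<phi> \<Delta> (\<Delta>/2) y\<bar> \<le> K * max y \<Delta> powr (\<alpha> - 1)"
      by linarith+
    moreover have "phibar' \<phi> \<Delta> y = HL' \<phi> \<Delta> (\<Delta>/2) y" "phibar'' \<phi> \<Delta> y = HL'' \<phi> \<Delta> (\<Delta>/2) y"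
      using 2 by (simp_all add: phibar'_def phibar''_def)
    ultimately show ?thesis by simp
  next
    case 3
    then have y: "y \<in> {0<..1}" "max y \<Delta> = y" using \<Delta> by auto
    have "A * y powr (\<alpha> - 1) \<le> K * y powr (\<alpha> - 1)"
      using \<open>A \<le> K\<close> by (intro mult_right_mono) auto
    then have "\<bar>phider 1 \<phi> y\<bar> \<le> K * y powr (\<alpha> - 1)" "\<bar>y * phider 2 \<phi> y\<bar> \<le> K * y powr (\<alpha> - 1)"
      using hderiv_1_2_powr_bounds[OF A y(1)] by linarith+
    then show ?thesis
      using 3 \<Delta> y by (auto simp: phibar'_def phibar''_def)
  next
    case 4
    then have "(y - 1) / (2 - 1) \<in> {0..1::real}" by auto
    moreover have "\<forall>m\<in>{1..4}. \<bar>phider m \<phi> 1\<bar> \<le> A * 1 powr (\<alpha> - real m)"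
      using A by (metis greaterThanAtMost_iff zero_less_one order_refl)
    ultimately have HL: "\<bar>HL' \<phi> 1 2 y\<bar> \<le> 32 * A * G" "\<bar>y * HL'' \<phi> 1 2 y\<bar> \<le> 32 * A * G"
      using HL'_HL''_bounds[of 1 2 y \<phi> A \<alpha> G] G \<open>A > 0\<close> \<open>G > 0\<close> by auto
    have "1 / 2 \<le> y powr (\<alpha> - 1)"
      using powr_mono2'[of "\<alpha> - 1" y 2] powr_mono[of "-1" "\<alpha> - 1" 2] 4 alpha
      by (simp add: powr_minus_divide)
    then have "K * (1 / 2) \<le> K * y powr (\<alpha> - 1)"
      using \<open>K \<ge> 0\<close> by (rule mult_left_mono)
    moreover have "32 * A * G \<le> K * (1 / 2)"
      unfolding K_def using \<open>A > 0\<close> by simp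
    ultimately show ?thesis
      using HL 4 \<Delta> by (auto simp: phibar'_def phibar''_def)
  next
    case 5
    then show ?thesis using \<open>K \<ge> 0\<close> pos \<Delta> by (simp add: phibar'_def phibar''_def)
  qed
  then show "\<bar>phibar' \<phi> \<Delta> y\<bar> \<le> (64 * A * G + A) * max y \<Delta> powr (\<alpha> - 1)"
    "\<bar>y * phibar'' \<phi> \<Delta> y\<bar> \<le> (64 * A * G + A) * max y \<Delta> powr (\<alpha> - 1)"
    unfolding K_def by auto
qed

section \<open>The variance bound\<close>

lemma abs_diff_le_of_deriv_powr_bound:
  fixes F F' :: "real \<Rightarrow> real"
  assumes deriv: "\<And>y. (F has_real_derivative F' y) (at y)"
    and bound: "\<And>y. y \<ge> 0 \<Longrightarrow> \<bar>F' y\<bar> \<le> K * max y \<Delta> powr (\<alpha> - 1)"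
    and "K \<ge> 0" "\<alpha> < 1" "\<Delta> > 0" "x \<ge> 0" "p \<ge> 0"
  shows "\<bar>F x - F p\<bar> \<le> K * max (min x p) \<Delta> powr (\<alpha> - 1) * \<bar>x - p\<bar>"
proof (cases "x = p")
  case False
  define lo hi where "lo = min x p" and "hi = max x p"
  have "lo < hi" using False unfolding lo_def hi_def by auto
  then obtain z where z: "lo < z" "z < hi" "F hi - F lo = (hi - lo) * F' z"
    using MVT2[of lo hi F F'] deriv by blast
  have "lo \<ge> 0" unfolding lo_def using assms by simp
  have "\<bar>F x - F p\<bar> = (hi - lo) * \<bar>F' z\<bar>"
    using z \<open>lo < hi\<close> unfolding lo_def hi_def by (cases "x \<le> p") (auto simp: abs_mult abs_minus_commute)
  also have "\<dots> \<le> (hi - lo) * (K * max z \<Delta> powr (\<alpha> - 1))"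
    using bound[of z] z \<open>lo \<ge> 0\<close> \<open>lo < hi\<close> by (intro mult_left_mono) auto
  also have "\<dots> \<le> (hi - lo) * (K * max lo \<Delta> powr (\<alpha> - 1))"
    using z assms \<open>lo < hi\<close> by (intro mult_left_mono powr_mono2') auto
  also have "hi - lo = \<bar>x - p\<bar>" unfolding lo_def hi_def by auto
  finally show ?thesis unfolding lo_def by (simp add: mult_ac)
qed simp

lemma cube_div_6_le_exp: "x \<ge> 0 \<Longrightarrow> x ^ 3 / 6 \<le> exp (x::real)"
proof -
  assume "x \<ge> 0"
  have "(\<Sum>k\<in>{3}. x ^ k / fact k) \<le> (\<Sum>k. x ^ k / fact k)"
    by (rule sum_le_suminf) (use sums_exp_real[of x] \<open>x \<ge> 0\<close> in \<open>auto simp: sums_iff\<close>)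
  also have "\<dots> = exp x" using sums_exp_real[of x] by (simp add: sums_iff)
  finally show ?thesis by (simp add: fact_numeral)
qed

lemma powr_mult_exp_neg_le:
  fixes l c \<beta> :: real
  assumes "l > 0" "c > 0" "0 \<le> \<beta>" "\<beta> \<le> 3"
  shows "l powr \<beta> * exp (- c * l) \<le> 1 + 6 / c ^ 3"
proof (cases "l \<le> 1")
  case True
  have "l powr \<beta> * exp (- c * l) \<le> 1 * 1"
    using True assms by (intro mult_mono powr_le1) auto
  moreover have "0 \<le> 6 / c ^ 3" using assms by simp
  ultimately show ?thesis by linarith
next
  case False
  have "l powr \<beta> \<le> l ^ 3"
    using False assms powr_mono[of \<beta> 3 l] by (simp add: powr_realpow)
  moreover have "(c * l) ^ 3 / 6 \<le> exp (c * l)"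
    using assms by (intro cube_div_6_le_exp) auto
  then have "l ^ 3 * exp (- c * l) \<le> 6 / c ^ 3"
    using assms by (simp add: exp_minus field_simps power_mult_distrib)
  ultimately have "l powr \<beta> * exp (- c * l) \<le> 6 / c ^ 3"
    by (meson exp_ge_zero mult_right_mono order_trans)
  then show ?thesis by simp
qed

lemma sq_powr: "(x powr a)\<^sup>2 = x powr (2 * a)" for x a :: real
  by (simp add: power2_eq_square powr_add[symmetric])

lemma sq_half_powr_le:
  fixes p \<alpha> :: real
  assumes "p > 0" "0 \<le> \<alpha>" "\<alpha> \<le> 1"
  shows "((p / 2) powr (\<alpha> - 1))\<^sup>2 \<le> 4 * p powr (2 * \<alpha> - 2)"
proof -
  have "1 / 2 powr (2 * \<alpha> - 2) = (2::real) powr (2 - 2 * \<alpha>)"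
    using powr_minus_divide[of "2::real" "2 * \<alpha> - 2"] by simp
  have "((p / 2) powr (\<alpha> - 1))\<^sup>2 = (p / 2) powr (2 * \<alpha> - 2)"
    by (simp add: sq_powr algebra_simps)
  also have "\<dots> = p powr (2 * \<alpha> - 2) * (1 / 2 powr (2 * \<alpha> - 2))"
    using assms by (simp add: powr_divide)
  also have "\<dots> = p powr (2 * \<alpha> - 2) * 2 powr (2 - 2 * \<alpha>)"
    by (simp only: \<open>1 / 2 powr (2 * \<alpha> - 2) = 2 powr (2 - 2 * \<alpha>)\<close>)
  also have "\<dots> \<le> p powr (2 * \<alpha> - 2) * 2 powr 2"
    using assms by (intro mult_left_mono powr_mono) auto
  finally show ?thesis by simp
qed

lemma sq_powr_mult_sq_le:
  fixes \<alpha> c0 \<Delta> p :: real and n :: nat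
  assumes "\<alpha> < 1" "c0 > 0" "n \<ge> 1" "p > 0" "c0 / real n \<le> \<Delta>"
  shows "(\<Delta> powr (\<alpha> - 1))\<^sup>2 * p\<^sup>2 \<le>
    c0 powr (2 * \<alpha> - 2) * (real n * p) powr (3 - 2 * \<alpha>) * (p powr (2 * \<alpha> - 1) / real n)"
proof -
  have "(\<Delta> powr (\<alpha> - 1))\<^sup>2 = \<Delta> powr (2 * \<alpha> - 2)"
    by (simp add: sq_powr algebra_simps)
  also have "\<dots> \<le> (c0 / real n) powr (2 * \<alpha> - 2)"
    using assms by (intro powr_mono2') auto
  also have "\<dots> = c0 powr (2 * \<alpha> - 2) * (1 / real n powr (2 * \<alpha> - 2))"
    using assms by (simp add: powr_divide)
  also have "\<dots> = c0 powr (2 * \<alpha> - 2) * real n powr (2 - 2 * \<alpha>)"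
    using powr_minus_divide[of "real n" "2 * \<alpha> - 2"] by simp
  finally have "(\<Delta> powr (\<alpha> - 1))\<^sup>2 * p\<^sup>2 \<le> c0 powr (2 * \<alpha> - 2) * (real n powr (2 - 2 * \<alpha>) * p\<^sup>2)"
    by (metis mult.assoc mult_right_mono zero_le_power2)
  also have "real n powr (2 - 2 * \<alpha>) * p\<^sup>2 = (real n * p) powr (3 - 2 * \<alpha>) * (p powr (2 * \<alpha> - 1) / real n)"
    using assms by (simp add: powr_mult powr_diff powr_add power2_eq_square power3_eq_cube field_simps)
  finally show ?thesis by (simp add: mult.assoc)
qed

lemma poisson_bound_terms_le:
  fixes \<alpha> c0 \<Delta> p :: real and n :: nat
  assumes alpha: "0 < \<alpha>" "\<alpha> < 1" and "c0 > 0" "n \<ge> 1" "c0 / real n \<le> \<Delta>" "\<Delta> < p"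
  shows "2 * ((p / 2) powr (\<alpha> - 1))\<^sup>2 * (p / real n) + ((p / 2) powr (\<alpha> - 1))\<^sup>2 / (2 * (real n)\<^sup>2)
      + (\<Delta> powr (\<alpha> - 1))\<^sup>2 * p\<^sup>2 * (2 + 1 / (2 * c0\<^sup>2)) * exp (- ((1 - ln 2) / 2) * (real n * p))
    \<le> (8 + 2 / c0 + (2 + 1 / (2 * c0\<^sup>2)) * c0 powr (2 * \<alpha> - 2) * (1 + 6 / ((1 - ln 2) / 2) ^ 3))
      * (p powr (2 * \<alpha> - 1) / real n)"
proof -
  define N c where "N = real n" and "c = (1 - ln 2) / (2::real)"
  define Pa where "Pa = p powr (2 * \<alpha> - 1) / N"
  have "N \<ge> 1" "c > 0" "Pa \<ge> 0" unfolding N_def c_def Pa_def using assms ln_2_less_1 by auto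
  have "c0 / N > 0" using \<open>c0 > 0\<close> \<open>N \<ge> 1\<close> by simp
  then have "p > 0" using assms unfolding N_def by linarith
  have "c0 \<le> \<Delta> * N"
    using assms \<open>N \<ge> 1\<close> unfolding N_def by (simp add: divide_le_eq)
  also have "\<dots> \<le> N * p"
    using assms \<open>N \<ge> 1\<close> by (simp add: mult.commute)
  finally have "c0 \<le> N * p" .
  have P: "((p / 2) powr (\<alpha> - 1))\<^sup>2 \<le> 4 * p powr (2 * \<alpha> - 2)"
    using sq_half_powr_le[of p \<alpha>] \<open>p > 0\<close> alpha by simp
  have Pa: "p powr (2 * \<alpha> - 2) * p = N * Pa"
    unfolding Pa_def using \<open>p > 0\<close> \<open>N \<ge> 1\<close> by (simp add: powr_mult_base mult.commute)
  have t1: "2 * ((p / 2) powr (\<alpha> - 1))\<^sup>2 * (p / N) \<le> 8 * Pa"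
  proof -
    have "2 * ((p / 2) powr (\<alpha> - 1))\<^sup>2 * (p / N) \<le> 2 * (4 * p powr (2 * \<alpha> - 2)) * (p / N)"
      using P \<open>p > 0\<close> \<open>N \<ge> 1\<close> by (intro mult_right_mono mult_left_mono) auto
    then show ?thesis using Pa \<open>N \<ge> 1\<close> by (simp add: field_simps)
  qed
  have t2: "((p / 2) powr (\<alpha> - 1))\<^sup>2 / (2 * N\<^sup>2) \<le> 2 / c0 * Pa"
  proof -
    have "((p / 2) powr (\<alpha> - 1))\<^sup>2 / (2 * N\<^sup>2) \<le> 4 * p powr (2 * \<alpha> - 2) / (2 * N\<^sup>2)"
      using P by (intro divide_right_mono) auto
    also have "\<dots> = 2 * Pa / (N * p)"
      using Pa \<open>p > 0\<close> \<open>N \<ge> 1\<close> by (simp add: field_simps power2_eq_square)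
    also have "\<dots> \<le> 2 * Pa / c0"
      using \<open>c0 \<le> N * p\<close> \<open>c0 > 0\<close> \<open>Pa \<ge> 0\<close> by (intro divide_left_mono) auto
    finally show ?thesis by simp
  qed
  have t3: "(\<Delta> powr (\<alpha> - 1))\<^sup>2 * p\<^sup>2 * exp (- c * (N * p)) \<le> c0 powr (2 * \<alpha> - 2) * (1 + 6 / c ^ 3) * Pa"
  proof -
    have "(\<Delta> powr (\<alpha> - 1))\<^sup>2 * p\<^sup>2 \<le> c0 powr (2 * \<alpha> - 2) * (N * p) powr (3 - 2 * \<alpha>) * Pa"
      using sq_powr_mult_sq_le[of \<alpha> c0 n p \<Delta>] assms \<open>p > 0\<close> unfolding N_def Pa_def by simp
    then have "(\<Delta> powr (\<alpha> - 1))\<^sup>2 * p\<^sup>2 * exp (- c * (N * p))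
        \<le> c0 powr (2 * \<alpha> - 2) * (N * p) powr (3 - 2 * \<alpha>) * Pa * exp (- c * (N * p))"
      by (rule mult_right_mono) simp
    also have "\<dots> = c0 powr (2 * \<alpha> - 2) * Pa * ((N * p) powr (3 - 2 * \<alpha>) * exp (- c * (N * p)))"
      by (simp add: mult_ac)
    also have "\<dots> \<le> c0 powr (2 * \<alpha> - 2) * Pa * (1 + 6 / c ^ 3)"
      using powr_mult_exp_neg_le[of "N * p" c "3 - 2 * \<alpha>"] \<open>N \<ge> 1\<close> \<open>p > 0\<close> \<open>c > 0\<close> \<open>Pa \<ge> 0\<close> alpha
      by (intro mult_left_mono) auto
    finally show ?thesis by (simp add: mult_ac)
  qed
  have "(\<Delta> powr (\<alpha> - 1))\<^sup>2 * p\<^sup>2 * (2 + 1 / (2 * c0\<^sup>2)) * exp (- c * (N * p))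
      \<le> (2 + 1 / (2 * c0\<^sup>2)) * (c0 powr (2 * \<alpha> - 2) * (1 + 6 / c ^ 3) * Pa)"
    using mult_left_mono[OF t3, of "2 + 1 / (2 * c0\<^sup>2)"] by (simp add: mult_ac)
  with t1 t2 have "2 * ((p / 2) powr (\<alpha> - 1))\<^sup>2 * (p / N) + ((p / 2) powr (\<alpha> - 1))\<^sup>2 / (2 * N\<^sup>2)
      + (\<Delta> powr (\<alpha> - 1))\<^sup>2 * p\<^sup>2 * (2 + 1 / (2 * c0\<^sup>2)) * exp (- c * (N * p))
    \<le> 8 * Pa + 2 / c0 * Pa + (2 + 1 / (2 * c0\<^sup>2)) * (c0 powr (2 * \<alpha> - 2) * (1 + 6 / c ^ 3) * Pa)"
    by linarith
  also have "\<dots> = (8 + 2 / c0 + (2 + 1 / (2 * c0\<^sup>2)) * c0 powr (2 * \<alpha> - 2) * (1 + 6 / c ^ 3)) * Pa"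
    by (simp only: distrib_right mult.assoc)
  finally show ?thesis
    unfolding N_def c_def Pa_def .
qed

lemma sq_dev_le_two_regimes:
  fixes U W x p \<Delta> K \<alpha> c0 R :: real and n :: nat
  assumes U: "\<bar>U\<bar> \<le> K * max (min x p) \<Delta> powr (\<alpha> - 1) * \<bar>x - p\<bar>"
    and W: "\<bar>W\<bar> \<le> K * max x \<Delta> powr (\<alpha> - 1)"
    and "x \<ge> 0" "p > 0" "\<Delta> > 0" "\<alpha> < 1" "K \<ge> 0" "n \<ge> 1" "c0 > 0" "c0 \<le> real n * p"
    and R: "R \<ge> 0" "x < p / 2 \<Longrightarrow> 1 \<le> R"
  shows "(U - W / (2 * real n))\<^sup>2 \<le> K\<^sup>2 * (2 * ((p / 2) powr (\<alpha> - 1))\<^sup>2 * (x - p)\<^sup>2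
      + ((p / 2) powr (\<alpha> - 1))\<^sup>2 / (2 * (real n)\<^sup>2) + (\<Delta> powr (\<alpha> - 1))\<^sup>2 * p\<^sup>2 * (2 + 1 / (2 * c0\<^sup>2)) * R)"
proof -
  define P Q where "P = (p / 2) powr (\<alpha> - 1)" and "Q = \<Delta> powr (\<alpha> - 1)"
  have "(U - W / (2 * real n))\<^sup>2 \<le> 2 * U\<^sup>2 + 2 * (W / (2 * real n))\<^sup>2"
    using sum_squares_ge_zero[of "U + W / (2 * real n)" 0] by (simp add: power2_eq_square algebra_simps)
  also have "\<dots> = 2 * U\<^sup>2 + W\<^sup>2 / (2 * (real n)\<^sup>2)"
    by (simp add: power_divide power_mult_distrib)
  finally have split: "(U - W / (2 * real n))\<^sup>2 \<le> 2 * U\<^sup>2 + W\<^sup>2 / (2 * (real n)\<^sup>2)" .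
  show ?thesis
  proof (cases "p / 2 \<le> x")
    case True
    have "max (min x p) \<Delta> powr (\<alpha> - 1) \<le> P" "max x \<Delta> powr (\<alpha> - 1) \<le> P"
      unfolding P_def using True assms by (auto intro!: powr_mono2')
    then have "\<bar>U\<bar> \<le> K * P * \<bar>x - p\<bar>" "\<bar>W\<bar> \<le> K * P"
      using order.trans[OF U mult_right_mono[OF mult_left_mono[OF _ \<open>K \<ge> 0\<close>] abs_ge_zero]]
        order.trans[OF W mult_left_mono[OF _ \<open>K \<ge> 0\<close>]] by auto
    then have "U\<^sup>2 \<le> (K * P * \<bar>x - p\<bar>)\<^sup>2" "W\<^sup>2 \<le> (K * P)\<^sup>2"
      by (auto simp: power2_le_iff_abs_le order.trans[OF abs_ge_zero])
    then have "(U - W / (2 * real n))\<^sup>2 \<le> K\<^sup>2 * (2 * P\<^sup>2 * (x - p)\<^sup>2 + P\<^sup>2 / (2 * (real n)\<^sup>2))"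
      using split \<open>n \<ge> 1\<close> divide_right_mono[of "W\<^sup>2" "(K * P)\<^sup>2" "2 * (real n)\<^sup>2"]
      by (auto simp: power_mult_distrib algebra_simps add_divide_distrib)
    moreover have "0 \<le> K\<^sup>2 * (Q\<^sup>2 * p\<^sup>2 * (2 + 1 / (2 * c0\<^sup>2)) * R)"
      using R by simp
    ultimately show ?thesis unfolding P_def Q_def by (simp add: algebra_simps)
  next
    case False
    have "max (min x p) \<Delta> powr (\<alpha> - 1) \<le> Q" "max x \<Delta> powr (\<alpha> - 1) \<le> Q"
      unfolding Q_def using assms by (auto intro!: powr_mono2')
    moreover have "\<bar>x - p\<bar> \<le> p" using False assms by auto
    moreover have "Q \<ge> 0" unfolding Q_def by simp
    ultimately have "\<bar>U\<bar> \<le> K * Q * p" "\<bar>W\<bar> \<le> K * Q"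
      using order.trans[OF U mult_mono[OF mult_left_mono[OF _ \<open>K \<ge> 0\<close>]]]
        order.trans[OF W mult_left_mono[OF _ \<open>K \<ge> 0\<close>]] \<open>K \<ge> 0\<close> by auto
    then have "U\<^sup>2 \<le> (K * Q * p)\<^sup>2" "W\<^sup>2 \<le> (K * Q)\<^sup>2"
      by (auto simp: power2_le_iff_abs_le order.trans[OF abs_ge_zero])
    have "c0\<^sup>2 \<le> (real n * p)\<^sup>2"
      using assms by (intro power_mono) auto
    then have "1 / (real n)\<^sup>2 \<le> p\<^sup>2 / c0\<^sup>2"
      using assms by (simp add: field_simps power_mult_distrib)
    then have "K\<^sup>2 * Q\<^sup>2 / 2 * (1 / (real n)\<^sup>2) \<le> K\<^sup>2 * Q\<^sup>2 / 2 * (p\<^sup>2 / c0\<^sup>2)"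
      by (intro mult_left_mono) auto
    moreover have "W\<^sup>2 / (2 * (real n)\<^sup>2) \<le> K\<^sup>2 * Q\<^sup>2 / 2 * (1 / (real n)\<^sup>2)"
      using \<open>W\<^sup>2 \<le> (K * Q)\<^sup>2\<close> by (simp add: divide_right_mono power_mult_distrib)
    ultimately have "W\<^sup>2 / (2 * (real n)\<^sup>2) \<le> K\<^sup>2 * Q\<^sup>2 / 2 * (p\<^sup>2 / c0\<^sup>2)"
      by linarith
    then have "(U - W / (2 * real n))\<^sup>2 \<le> K\<^sup>2 * (Q\<^sup>2 * p\<^sup>2 * (2 + 1 / (2 * c0\<^sup>2)))"
      using split \<open>U\<^sup>2 \<le> (K * Q * p)\<^sup>2\<close> by (simp add: power_mult_distrib algebra_simps)
    also have "\<dots> \<le> K\<^sup>2 * (Q\<^sup>2 * p\<^sup>2 * (2 + 1 / (2 * c0\<^sup>2)) * R)"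
    proof -
      have "0 \<le> Q\<^sup>2 * p\<^sup>2 * (2 + 1 / (2 * c0\<^sup>2))" by simp
      then have "Q\<^sup>2 * p\<^sup>2 * (2 + 1 / (2 * c0\<^sup>2)) * 1 \<le> Q\<^sup>2 * p\<^sup>2 * (2 + 1 / (2 * c0\<^sup>2)) * R"
        using R False by (intro mult_left_mono) auto
      then show ?thesis by (intro mult_left_mono) auto
    qed
    also have "\<dots> \<le> K\<^sup>2 * (2 * P\<^sup>2 * (x - p)\<^sup>2 + P\<^sup>2 / (2 * (real n)\<^sup>2) + Q\<^sup>2 * p\<^sup>2 * (2 + 1 / (2 * c0\<^sup>2)) * R)"
      by (intro mult_left_mono) auto
    finally show ?thesis unfolding P_def Q_def .
  qed
qed

definition phibar_estimator :: "(real \<Rightarrow> real) \<Rightarrow> real \<Rightarrow> nat \<Rightarrow> real \<Rightarrow> nat \<Rightarrow> real" where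
  "phibar_estimator \<phi> \<Delta> n p N =
     phibar \<phi> \<Delta> (real N / real n) - real N / (2 * (real n)\<^sup>2) * phibar2 \<phi> \<Delta> (real N / real n)
     - \<phi> p + p * phider 2 \<phi> p / (2 * real n)"

lemma phibar_estimator_dev_bounds:
  fixes \<alpha> A G c0 \<Delta> p :: real and \<phi> :: "real \<Rightarrow> real" and n k :: nat
  assumes alpha: "0 < \<alpha>" "\<alpha> < 1"
    and diff: "\<forall>k<4. \<forall>x\<in>{0<..1}.
        (phider k \<phi> has_vector_derivative phider (Suc k) \<phi> x) (at x within {0<..1})"
    and A: "A > 0" "\<forall>m\<in>{1..4}. \<forall>x\<in>{0<..1}. \<bar>phider m \<phi> x\<bar> \<le> A * x powr (\<alpha> - real m)"
    and G: "G > 0" "\<forall>m\<in>{1..4}. \<forall>t\<in>{0..1}.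
      \<bar>poly (pderiv (hermite_basis m)) t\<bar> \<le> G \<and> \<bar>poly (pderiv (pderiv (hermite_basis m))) t\<bar> \<le> G"
    and "n \<ge> 1" "0 < \<Delta>" "\<Delta> < p" "p \<le> 1"
  defines "K \<equiv> 64 * A * G + A"
    and "c1 \<equiv> phibar \<phi> \<Delta> p - \<phi> p + p * phider 2 \<phi> p / (2 * real n)"
  obtains U W where "phibar_estimator \<phi> \<Delta> n p k - c1 = U - W / (2 * real n)"
    and "\<bar>U\<bar> \<le> K * max (min (real k / real n) p) \<Delta> powr (\<alpha> - 1) * \<bar>real k / real n - p\<bar>"
    and "\<bar>W\<bar> \<le> K * max (real k / real n) \<Delta> powr (\<alpha> - 1)"
proof -
  define x where "x = real k / real n"
  have "\<Delta> < 1" "p > 0" "x \<ge> 0" using assms unfolding x_def by auto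
  note phibar' = has_real_derivative_phibar[OF \<open>0 < \<Delta>\<close> \<open>\<Delta> < 1\<close> diff]
  note phibar'' = has_real_derivative_phibar'[OF \<open>0 < \<Delta>\<close> \<open>\<Delta> < 1\<close> diff]
  note bounds = phibar_deriv_bounds[OF alpha \<open>0 < \<Delta>\<close> \<open>\<Delta> < 1\<close> A(1) G(1) A(2) G(2), folded K_def]
  have "K \<ge> 0" unfolding K_def using A G by simp
  have "deriv (phibar \<phi> \<Delta>) = phibar' \<phi> \<Delta>"
    using phibar' by (intro ext DERIV_imp_deriv)
  then have "phibar2 \<phi> \<Delta> = phibar'' \<phi> \<Delta>"
    unfolding phibar2_def using phibar'' by (intro ext DERIV_imp_deriv) simp
  then have "phibar_estimator \<phi> \<Delta> n p k - c1 =
      (phibar \<phi> \<Delta> x - phibar \<phi> \<Delta> p) - x * phibar'' \<phi> \<Delta> x / (2 * real n)"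
    unfolding phibar_estimator_def c1_def x_def using \<open>n \<ge> 1\<close> by (simp add: power2_eq_square field_simps)
  moreover have dev: "\<bar>phibar \<phi> \<Delta> y - phibar \<phi> \<Delta> p\<bar> \<le> K * max (min y p) \<Delta> powr (\<alpha> - 1) * \<bar>y - p\<bar>"
    if "y \<ge> 0" for y
    using phibar' bounds(1) \<open>K \<ge> 0\<close> alpha \<open>0 < \<Delta>\<close> that \<open>p > 0\<close>
    by (intro abs_diff_le_of_deriv_powr_bound[where F'="phibar' \<phi> \<Delta>"]) auto
  moreover have "\<bar>x * phibar'' \<phi> \<Delta> x\<bar> \<le> K * max x \<Delta> powr (\<alpha> - 1)"
    using bounds(2) \<open>x \<ge> 0\<close> by simp
  ultimately show thesis
    using that dev[OF \<open>x \<ge> 0\<close>] unfolding x_def by blast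
qed

lemma variance_phibar_estimator_le:
  fixes \<alpha> A G c0 \<Delta> p :: real and \<phi> :: "real \<Rightarrow> real" and n :: nat
  assumes alpha: "0 < \<alpha>" "\<alpha> < 1"
    and diff: "\<forall>k<4. \<forall>x\<in>{0<..1}.
        (phider k \<phi> has_vector_derivative phider (Suc k) \<phi> x) (at x within {0<..1})"
    and A: "A > 0" "\<forall>m\<in>{1..4}. \<forall>x\<in>{0<..1}. \<bar>phider m \<phi> x\<bar> \<le> A * x powr (\<alpha> - real m)"
    and G: "G > 0" "\<forall>m\<in>{1..4}. \<forall>t\<in>{0..1}.
      \<bar>poly (pderiv (hermite_basis m)) t\<bar> \<le> G \<and> \<bar>poly (pderiv (pderiv (hermite_basis m))) t\<bar> \<le> G"
    and "c0 > 0" "n \<ge> 1" "c0 / real n \<le> \<Delta>" "\<Delta> < p" "p \<le> 1"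
  shows "measure_pmf.variance (poisson_pmf (real n * p)) (phibar_estimator \<phi> \<Delta> n p)
    \<le> (64 * A * G + A)\<^sup>2 * (8 + 2 / c0 + (2 + 1 / (2 * c0\<^sup>2)) * c0 powr (2 * \<alpha> - 2)
        * (1 + 6 / ((1 - ln 2) / 2) ^ 3)) * (p powr (2 * \<alpha> - 1) / real n)"
proof -
  define K c1 l where "K = 64 * A * G + A"
    and "c1 = phibar \<phi> \<Delta> p - \<phi> p + p * phider 2 \<phi> p / (2 * real n)" and "l = real n * p"
  define P2 Q2 w where "P2 = ((p / 2) powr (\<alpha> - 1))\<^sup>2" and "Q2 = (\<Delta> powr (\<alpha> - 1))\<^sup>2"
    and "w = (\<lambda>k::nat. 2 powr (l / 2) * (1 / 2 :: real) ^ k)"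
  define \<Psi> where "\<Psi> = (\<lambda>k::nat. 2 * P2 / (real n)\<^sup>2 * (real k - l)\<^sup>2 + P2 / (2 * (real n)\<^sup>2)
      + Q2 * p\<^sup>2 * (2 + 1 / (2 * c0\<^sup>2)) * w k)"
  define M where "M = poisson_pmf l"
  have "c0 / real n > 0" using assms by simp
  then have "\<Delta> > 0" using assms by linarith
  then have "p > 0" "l > 0" "K \<ge> 0"
    using assms unfolding l_def K_def by auto
  have "c0 \<le> \<Delta> * real n"
    using assms by (simp add: divide_le_eq)
  also have "\<dots> \<le> p * real n"
    using assms by (intro mult_right_mono) auto
  finally have "c0 \<le> l"
    unfolding l_def by (simp add: mult.commute)
  note dev_bounds = phibar_estimator_dev_bounds[OF alpha diff A G \<open>n \<ge> 1\<close> \<open>\<Delta> > 0\<close> \<open>\<Delta> < p\<close> \<open>p \<le> 1\<close>,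
      folded K_def c1_def]
  have pointwise: "(phibar_estimator \<phi> \<Delta> n p k - c1)\<^sup>2 \<le> K\<^sup>2 * \<Psi> k" for k
  proof -
    obtain U W where "phibar_estimator \<phi> \<Delta> n p k - c1 = U - W / (2 * real n)"
      and "\<bar>U\<bar> \<le> K * max (min (real k / real n) p) \<Delta> powr (\<alpha> - 1) * \<bar>real k / real n - p\<bar>"
      and "\<bar>W\<bar> \<le> K * max (real k / real n) \<Delta> powr (\<alpha> - 1)"
      using dev_bounds[of k] by blast
    moreover have "real k / real n < p / 2 \<Longrightarrow> 1 \<le> w k"
      using poisson_chernoff_weight(3)[OF \<open>l > 0\<close>, of k] \<open>n \<ge> 1\<close>
      unfolding w_def l_def by (simp add: field_simps)
    moreover have "(real k / real n - p)\<^sup>2 = (real k - l)\<^sup>2 / (real n)\<^sup>2"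
      using \<open>n \<ge> 1\<close> unfolding l_def by (simp add: power_divide[symmetric] diff_divide_distrib)
    ultimately show ?thesis
      using sq_dev_le_two_regimes[of U K "real k / real n" p \<Delta> \<alpha> W n c0 "w k"] assms
        \<open>K \<ge> 0\<close> \<open>\<Delta> > 0\<close> \<open>p > 0\<close> \<open>c0 \<le> l\<close>
      unfolding \<Psi>_def P2_def Q2_def l_def w_def by simp
  qed
  note moment = poisson_second_central_moment[OF \<open>l > 0\<close>]
  note weight = poisson_chernoff_weight[OF \<open>l > 0\<close>]
  have int_\<Psi>: "integrable M \<Psi>"
    unfolding \<Psi>_def M_def w_def using moment(1) weight(1) by auto
  have "measure_pmf.expectation M \<Psi> = 2 * P2 * (p / real n) + P2 / (2 * (real n)\<^sup>2)
      + Q2 * p\<^sup>2 * (2 + 1 / (2 * c0\<^sup>2)) * exp (- ((1 - ln 2) / 2) * (real n * p))"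
    unfolding \<Psi>_def M_def w_def using moment weight \<open>n \<ge> 1\<close> unfolding l_def
    by (simp add: power2_eq_square)
  also have "\<dots> \<le> (8 + 2 / c0 + (2 + 1 / (2 * c0\<^sup>2)) * c0 powr (2 * \<alpha> - 2)
        * (1 + 6 / ((1 - ln 2) / 2) ^ 3)) * (p powr (2 * \<alpha> - 1) / real n)"
    unfolding P2_def Q2_def using poisson_bound_terms_le[OF alpha \<open>c0 > 0\<close> \<open>n \<ge> 1\<close>] assms by simp
  finally have expectation_\<Psi>: "measure_pmf.expectation M \<Psi> \<le> (8 + 2 / c0 + (2 + 1 / (2 * c0\<^sup>2))
      * c0 powr (2 * \<alpha> - 2) * (1 + 6 / ((1 - ln 2) / 2) ^ 3)) * (p powr (2 * \<alpha> - 1) / real n)" .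
  have int_dev: "integrable M (\<lambda>k. (phibar_estimator \<phi> \<Delta> n p k - c1)\<^sup>2)"
  proof (rule Bochner_Integration.integrable_bound)
    show "integrable M (\<lambda>k. K\<^sup>2 * \<Psi> k)"
      using int_\<Psi> by simp
    have "(phibar_estimator \<phi> \<Delta> n p k - c1)\<^sup>2 \<le> \<bar>K\<^sup>2 * \<Psi> k\<bar>" for k
      using pointwise[of k] abs_ge_self[of "K\<^sup>2 * \<Psi> k"] by linarith
    then show "AE k in M. norm ((phibar_estimator \<phi> \<Delta> n p k - c1)\<^sup>2) \<le> norm (K\<^sup>2 * \<Psi> k)"
      by simp
  qed simp
  then have variance: "measure_pmf.variance M (phibar_estimator \<phi> \<Delta> n p)
      \<le> measure_pmf.expectation M (\<lambda>k. (phibar_estimator \<phi> \<Delta> n p k - c1)\<^sup>2)"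
    by (rule variance_le_expectation_sq_dev)
  have "measure_pmf.expectation M (\<lambda>k. (phibar_estimator \<phi> \<Delta> n p k - c1)\<^sup>2)
      \<le> measure_pmf.expectation M (\<lambda>k. K\<^sup>2 * \<Psi> k)"
    using int_dev int_\<Psi> pointwise by (intro integral_mono) auto
  also have "\<dots> = K\<^sup>2 * measure_pmf.expectation M \<Psi>"
    by simp
  finally have "measure_pmf.expectation M (\<lambda>k. (phibar_estimator \<phi> \<Delta> n p k - c1)\<^sup>2)
      \<le> K\<^sup>2 * ((8 + 2 / c0 + (2 + 1 / (2 * c0\<^sup>2)) * c0 powr (2 * \<alpha> - 2)
        * (1 + 6 / ((1 - ln 2) / 2) ^ 3)) * (p powr (2 * \<alpha> - 1) / real n))"
    using expectation_\<Psi> by (meson mult_left_mono zero_le_power2 order_trans)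
  with variance show ?thesis
    unfolding M_def l_def K_def by (simp add: mult.assoc)
qed

text \<open>The proof gives the sharper bound
  \<open>C p^(2\<alpha>-1)/n\<close>.\<close>

theorem lemma7:
  fixes \<alpha> W c c' c0 :: real and \<phi> :: "real \<Rightarrow> real"
  assumes alpha: "0 < \<alpha>" "\<alpha> < 1"
    and nonneg: "\<forall>x\<in>{0..1}. 0 \<le> \<phi> x"
    and diff: "\<forall>k<4. \<forall>x\<in>{0<..1}.
        (phider k \<phi> has_vector_derivative phider (Suc k) \<phi> x) (at x within {0<..1})"
    and cont4: "continuous_on {0<..1} (phider 4 \<phi>)"
    and W: "W > 0"
    and bound4: "\<forall>p\<in>{0<..1}.
        (2-\<alpha>)*(3-\<alpha>)*(4-\<alpha>)*W*p powr (\<alpha>-4) + c' \<le> \<bar>phider 4 \<phi> p\<bar> \<and>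
        \<bar>phider 4 \<phi> p\<bar> \<le> (2-\<alpha>)*(3-\<alpha>)*(4-\<alpha>)*W*p powr (\<alpha>-4) + c"
    and c0: "c0 > 0"
  shows "\<exists>C>0. \<forall>(n::nat) \<Delta> p. n \<ge> 1 \<longrightarrow> c0 / real n \<le> \<Delta> \<longrightarrow> \<Delta> < p \<longrightarrow> p \<le> 1 \<longrightarrow>
     measure_pmf.variance (poisson_pmf (real n * p))
       (\<lambda>N. phibar \<phi> \<Delta> (real N / real n)
            - real N / (2 * (real n)^2) * phibar2 \<phi> \<Delta> (real N / real n)
            - \<phi> p + p * phider 2 \<phi> p / (2 * real n))
     \<le> C * (p powr (2*\<alpha>-1) / real n + 1 / ((real n)^4 * \<Delta> powr (4 - 2*\<alpha>)) + p / real n)"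
proof -
  obtain A where A: "A > 0" "\<forall>m\<in>{1..4}. \<forall>x\<in>{0<..1}. \<bar>phider m \<phi> x\<bar> \<le> A * x powr (\<alpha> - real m)"
    using hderiv_powr_bounds[OF alpha diff, of "(2-\<alpha>)*(3-\<alpha>)*(4-\<alpha>)*W" c] bound4 by blast
  obtain G where G: "G > 0" "\<forall>m\<in>{1..4}. \<forall>t\<in>{0..1}.
      \<bar>poly (pderiv (hermite_basis m)) t\<bar> \<le> G \<and> \<bar>poly (pderiv (pderiv (hermite_basis m))) t\<bar> \<le> G"
    using hermite_basis_derivs_bounded by blast
  define C where "C = (64 * A * G + A)\<^sup>2 * (8 + 2 / c0 + (2 + 1 / (2 * c0\<^sup>2)) * c0 powr (2 * \<alpha> - 2)
    * (1 + 6 / ((1 - ln 2) / 2) ^ 3))"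
  have "0 < 64 * A * G + A"
    using A(1) G(1) by (simp add: add_pos_pos)
  moreover have "0 < (1 - ln 2) / (2::real)"
    using ln_2_less_1 by simp
  ultimately have "C > 0"
    unfolding C_def using c0 by (intro mult_pos_pos add_pos_nonneg) auto
  moreover have "measure_pmf.variance (poisson_pmf (real n * p)) (phibar_estimator \<phi> \<Delta> n p)
      \<le> C * (p powr (2*\<alpha>-1) / real n + 1 / ((real n)^4 * \<Delta> powr (4 - 2*\<alpha>)) + p / real n)"
    if "n \<ge> 1" "c0 / real n \<le> \<Delta>" "\<Delta> < p" "p \<le> 1" for n \<Delta> p
  proof -
    have "c0 / real n > 0" using that c0 by simp
    then have "\<Delta> > 0" using that by linarith
    then have "0 \<le> 1 / ((real n)^4 * \<Delta> powr (4 - 2*\<alpha>)) + p / real n"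
      using that by simp
    then have "C * (p powr (2*\<alpha>-1) / real n)
        \<le> C * (p powr (2*\<alpha>-1) / real n + 1 / ((real n)^4 * \<Delta> powr (4 - 2*\<alpha>)) + p / real n)"
      using \<open>C > 0\<close> by (intro mult_left_mono) auto
    then show ?thesis
      using variance_phibar_estimator_le[OF alpha diff A G c0 that] unfolding C_def
      by (simp add: mult.assoc)
  qed
  ultimately show ?thesis
    unfolding phibar_estimator_def[abs_def] by blast
qed

end
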